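(* Let $\alpha$ be a badly approximable real number, i.e. $\inf_{q\ge1} q\,\|q\alpha\|>0$, and let $a$ be a real number with $0<a<1$. There exists a constant $C(\alpha)>0$ (depending on $\alpha$ and $a$) such that for every integer $q\ge2$, $$\sum_{x=q}^{q^3}\frac{1}{\|\alpha x\|\,x\,\bigl(\log(1/\|x\alpha\|)\bigr)^a\,(\log x)^{2-a}}\le C(\alpha).$$
   Context: For a real number $x$, $\|x\|$ denotes the distance from $x$ to the nearest integer. *)

theory Defs
  imports "HOL-Analysis.Analysis"
begin

definition dist_int :: "real \<Rightarrow> real" where
  "dist_int x = \<bar>x - of_int (round x)\<bar>"

definition badly_approximable :: "real \<Rightarrow> bool" where
  "badly_approximable \<alpha> \<longleftrightarrow> (INF q\<in>{1::nat..}. real q * dist_int (real q * \<alpha>)) > 0"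

end

theory Submission imports Defs begin

(* Let c > 0 with c <= n * ||n alpha|| for all n >= 1 (alpha badly approximable).
   Cover [q, q^3] by the dyadic blocks [2^k, 2^(k+1)) with m <= k <= 3m+2, where 2^m <= q.
   The heart of the proof is that each block contributes at most K/k:
   inside a block, two points x <> y have signed errors x*alpha - round (x*alpha) that differ
   by at least c/2^k, so at most 2(2^k/(c 2^(i+1)) + 1) of them have ||x alpha|| at dyadic
   level i, i.e. in (2^-(i+1), 2^-i].  On level i a summand is at most
   2^(i+1) / (2^k (i ln 2)^a (k ln 2)^(2-a)), levels range over 1..k+r with 2^r >= 1/c,
   and sum_(i <= k+r) i^-a <= (k+r)^(1-a)/(1-a) yields the bound K/k.
   Summing K/k over about 2m blocks with k >= m gives a bound independent of q. *)

text \<open>Discrete tangent-line bound for the concave function \<open>t powr (1-a)\<close>: each increment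
  dominates the derivative at the right end point.\<close>
lemma powr_neg_le_increment:
  fixes a :: real and n :: nat
  assumes a: "0 < a" "a < 1"
  shows "real (Suc n) powr (-a) \<le> (real (Suc n) powr (1-a) - real n powr (1-a)) / (1-a)"
proof (cases "n = 0")
  case True
  then show ?thesis using a by simp
next
  case False
  then have n: "real n > 0" by simp
  have young: "real n powr (1-a) * real (Suc n) powr a \<le> (1-a) * real n + a * real (Suc n)"
    using Youngs_inequality_0[of "1-a" a "real n" "real (Suc n)"] a n by simp
  have split_pow: "real (Suc n) powr (1-a) = real (Suc n) * real (Suc n) powr (-a)"
    by (simp add: powr_diff powr_minus divide_inverse)
  have "real n powr (1-a) = real n powr (1-a) * real (Suc n) powr a * real (Suc n) powr (-a)"
    by (simp add: powr_minus)
  also have "\<dots> \<le> ((1-a) * real n + a * real (Suc n)) * real (Suc n) powr (-a)"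
    by (rule mult_right_mono[OF young]) simp
  finally have "real n powr (1-a) \<le> (real n + a) * real (Suc n) powr (-a)"
    by (simp add: algebra_simps)
  then show ?thesis using a split_pow by (simp add: field_simps)
qed

lemma sum_powr_neg_le:
  fixes a :: real
  assumes "0 < a" "a < 1"
  shows "(\<Sum>i=1..n. real i powr (-a)) \<le> real n powr (1-a) / (1-a)"
proof (induction n)
  case 0
  then show ?case by simp
next
  case (Suc n)
  then show ?case
    using powr_neg_le_increment[OF assms, of n] by (simp add: diff_divide_distrib)
qed

text \<open>A set of \<open>\<delta>\<close>-separated values in a half-open interval of length \<open>len\<close> has
  at most \<open>len/\<delta> + 1\<close> elements: the map to \<open>\<lfloor>(v x - lo)/\<delta>\<rfloor>\<close> is injective.\<close>
lemma card_separated_le: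
  fixes v :: "'b \<Rightarrow> real"
  assumes \<delta>: "0 < \<delta>" and len: "0 \<le> len"
    and sep: "\<And>x y. x \<in> S \<Longrightarrow> y \<in> S \<Longrightarrow> x \<noteq> y \<Longrightarrow> \<delta> \<le> \<bar>v x - v y\<bar>"
    and range: "\<And>x. x \<in> S \<Longrightarrow> lo < v x \<and> v x \<le> lo + len"
  shows "real (card S) \<le> len / \<delta> + 1"
proof -
  define bin where "bin x = nat \<lfloor>(v x - lo) / \<delta>\<rfloor>" for x
  have "inj_on bin S"
  proof (rule inj_onI, rule ccontr)
    fix x y assume xy: "x \<in> S" "y \<in> S" "bin x = bin y" "x \<noteq> y"
    have "0 < (v x - lo) / \<delta>" "0 < (v y - lo) / \<delta>" using range xy \<delta> by auto
    with xy(3) have "\<lfloor>(v x - lo) / \<delta>\<rfloor> = \<lfloor>(v y - lo) / \<delta>\<rfloor>"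
      unfolding bin_def by (simp add: eq_nat_nat_iff)
    then have "\<bar>(v x - lo) / \<delta> - (v y - lo) / \<delta>\<bar> < 1"
      using floor_correct[of "(v x - lo) / \<delta>"] floor_correct[of "(v y - lo) / \<delta>"] by linarith
    then have "\<bar>v x - v y\<bar> < \<delta>" using \<delta> by (simp add: diff_divide_distrib[symmetric] abs_divide)
    with sep[OF xy(1,2,4)] show False by simp
  qed
  moreover have "bin ` S \<subseteq> {0..nat \<lfloor>len / \<delta>\<rfloor>}"
  proof
    fix z assume "z \<in> bin ` S"
    then obtain x where x: "x \<in> S" "z = bin x" by auto
    have "(v x - lo) / \<delta> \<le> len / \<delta>" using range[OF x(1)] \<delta> by (simp add: divide_right_mono)
    then show "z \<in> {0..nat \<lfloor>len / \<delta>\<rfloor>}" unfolding x bin_def by (simp add: floor_mono nat_mono)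
  qed
  ultimately have "card S \<le> nat \<lfloor>len / \<delta>\<rfloor> + 1"
    using card_image card_mono[of "{0..nat \<lfloor>len / \<delta>\<rfloor>}" "bin ` S"] by fastforce
  then have "real (card S) \<le> real (nat \<lfloor>len / \<delta>\<rfloor>) + 1" by linarith
  also have "real (nat \<lfloor>len / \<delta>\<rfloor>) \<le> len / \<delta>" using len \<delta> by simp
  finally show ?thesis by simp
qed

lemma sum_le_card_fibres:
  fixes f :: "'a \<Rightarrow> real" and U :: "'b \<Rightarrow> real"
  assumes "finite B" "finite I" "g ` B \<subseteq> I" and bound: "\<And>x. x \<in> B \<Longrightarrow> f x \<le> U (g x)"
  shows "(\<Sum>x\<in>B. f x) \<le> (\<Sum>i\<in>I. real (card {x\<in>B. g x = i}) * U i)"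
proof -
  have "(\<Sum>x\<in>B. f x) = (\<Sum>i\<in>I. \<Sum>x\<in>{x\<in>B. g x = i}. f x)"
    using sum.group[OF assms(1-3), of f] by simp
  also have "\<dots> \<le> (\<Sum>i\<in>I. \<Sum>x\<in>{x\<in>B. g x = i}. U i)"
    using bound by (intro sum_mono) auto
  finally show ?thesis by simp
qed

lemma inverse_prod_powr_antimono:
  fixes d x L P d' x' L' P' a b :: real
  assumes "0 < d'" "d' \<le> d" "0 < x'" "x' \<le> x" "0 < L'" "L' \<le> L" "0 < P'" "P' \<le> P"
    and "0 \<le> a" "0 \<le> b"
  shows "1 / (d * x * L powr a * P powr b) \<le> 1 / (d' * x' * L' powr a * P' powr b)"
proof -
  have pos: "0 < d' * x' * L' powr a * P' powr b" using assms by simp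
  have le: "d' * x' * L' powr a * P' powr b \<le> d * x * L powr a * P powr b"
    using assms by (intro mult_mono powr_mono2) auto
  show ?thesis
    by (rule divide_left_mono[OF le zero_le_one mult_pos_pos]) (use pos le in linarith)+
qed

lemma sum_dyadic_blocks:
  fixes f :: "nat \<Rightarrow> real"
  shows "(\<Sum>x\<in>{2^m..<2^(m+n)}. f x) = (\<Sum>k\<in>{m..<m+n}. \<Sum>x\<in>{2^k..<2^(k+1)}. f x)"
proof (induction n)
  case 0
  then show ?case by simp
next
  case (Suc n)
  have "(2::nat)^m \<le> 2^(m+n)" "(2::nat)^(m+n) \<le> 2^(m + Suc n)"
    by (simp_all add: power_increasing)
  then have "(\<Sum>x\<in>{2^m..<2^(m+Suc n)}. f x)
      = (\<Sum>x\<in>{2^m..<2^(m+n)}. f x) + (\<Sum>x\<in>{2^(m+n)..<2^(m+Suc n)}. f x)"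
    by (simp add: sum.atLeastLessThan_concat)
  with Suc show ?case by simp
qed

text \<open>If the dyadic block starting at \<open>2^k\<close> contributes at most \<open>K/k\<close>, then the sum
  over \<open>[q, q^3]\<close> is bounded independently of \<open>q\<close>: it meets at most \<open>2m+3\<close> blocks,
  all with \<open>k \<ge> m\<close>, where \<open>2^m \<le> q < 2^(m+1)\<close>.\<close>
lemma sum_to_cube_le:
  fixes f :: "nat \<Rightarrow> real"
  assumes nonneg: "\<And>x. 0 \<le> f x" and K: "0 \<le> K"
    and block: "\<And>k. 1 \<le> k \<Longrightarrow> (\<Sum>x\<in>{2^k..<2^(k+1)}. f x) \<le> K / real k"
    and q: "2 \<le> q"
  shows "(\<Sum>x=q..q^3. f x) \<le> 5 * K"
proof -
  obtain m where m: "2^m \<le> q" "q < 2^(m+1)" using ex_power_ivl1[of 2 q] q by auto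
  have m1: "1 \<le> m" using m q by (cases m) auto
  have "q^3 < (2^(m+1))^3" using m(2) by (intro power_strict_mono) auto
  also have "\<dots> = 2^((m+1)*3)" by (rule power_mult[symmetric])
  also have "(m+1)*3 = m + (2*m+3)" by simp
  finally have q3: "q^3 < 2^(m + (2*m+3))" .
  have "(\<Sum>x=q..q^3. f x) \<le> (\<Sum>x\<in>{2^m..<2^(m + (2*m+3))}. f x)"
    by (rule sum_mono2) (use m q3 nonneg in auto)
  also have "\<dots> = (\<Sum>k\<in>{m..<m+(2*m+3)}. \<Sum>x\<in>{2^k..<2^(k+1)}. f x)"
    by (rule sum_dyadic_blocks)
  also have "\<dots> \<le> (\<Sum>k\<in>{m..<m+(2*m+3)}. K / real m)"
  proof (rule sum_mono)
    fix k assume k: "k \<in> {m..<m+(2*m+3)}"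
    then have "(\<Sum>x\<in>{2^k..<2^(k+1)}. f x) \<le> K / real k" using m1 block by simp
    also have "\<dots> \<le> K / real m" using k m1 K by (intro divide_left_mono) auto
    finally show "(\<Sum>x\<in>{2^k..<2^(k+1)}. f x) \<le> K / real m" .
  qed
  also have "\<dots> = real (2*m+3) / real m * K" by simp
  also have "\<dots> \<le> 5 * K"
    using m1 K by (intro mult_right_mono) (auto simp: field_simps)
  finally show ?thesis .
qed

section \<open>Diophantine properties of a badly approximable number\<close>

lemma dist_int_nonneg: "0 \<le> dist_int z"
  by (simp add: dist_int_def)

lemma dist_int_le_half: "dist_int z \<le> 1/2"
  using of_int_round_abs_le[of z] by (simp add: dist_int_def abs_minus_commute)

lemma dist_int_le: "dist_int z \<le> \<bar>z - of_int m\<bar>"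
  by (simp add: dist_int_def round_diff_minimal)

definition bad_const :: "real \<Rightarrow> real \<Rightarrow> bool" where
  "bad_const \<alpha> c \<longleftrightarrow> 0 < c \<and> (\<forall>n::nat. 1 \<le> n \<longrightarrow> c \<le> real n * dist_int (real n * \<alpha>))"

lemma badly_approximable_bad_const:
  assumes "badly_approximable \<alpha>"
  shows "\<exists>c. bad_const \<alpha> c"
proof -
  define c where "c = (INF q\<in>{1::nat..}. real q * dist_int (real q * \<alpha>))"
  have "bdd_below ((\<lambda>q. real q * dist_int (real q * \<alpha>)) ` {1::nat..})"
    by (rule bdd_belowI[of _ 0]) (auto simp: dist_int_nonneg)
  then have "bad_const \<alpha> c"
    using assms cINF_lower unfolding c_def bad_const_def badly_approximable_def by fastforce
  then show ?thesis ..
qed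

lemma bad_const_dist_pos:
  assumes "bad_const \<alpha> c" "1 \<le> x"
  shows "0 < dist_int (real x * \<alpha>)"
proof -
  have "c \<le> real x * dist_int (real x * \<alpha>)" "0 < c"
    using assms unfolding bad_const_def by auto
  then show ?thesis using dist_int_nonneg[of "real x * \<alpha>"] by (cases "dist_int (real x * \<alpha>) = 0") auto
qed

definition signed_err :: "real \<Rightarrow> nat \<Rightarrow> real" where
  "signed_err \<alpha> x = real x * \<alpha> - of_int (round (real x * \<alpha>))"

lemma abs_signed_err: "\<bar>signed_err \<alpha> x\<bar> = dist_int (real x * \<alpha>)"
  by (simp add: signed_err_def dist_int_def)

text \<open>Within a window of length \<open>M\<close> the signed errors are \<open>c/M\<close>-separated, since
  their difference is \<open>(x - y) \<alpha>\<close> minus an integer.\<close>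
lemma signed_err_separated:
  assumes bad: "bad_const \<alpha> c"
    and x: "x \<in> {N..<N+M}" and y: "y \<in> {N..<N+M}" and "x \<noteq> y"
  shows "c / real M \<le> \<bar>signed_err \<alpha> x - signed_err \<alpha> y\<bar>"
proof -
  have less: "c / real M \<le> \<bar>signed_err \<alpha> u - signed_err \<alpha> v\<bar>"
    if "v < u" "u < v + M" for u v
  proof -
    define n where "n = u - v"
    have n: "1 \<le> n" "n < M" using that by (auto simp: n_def)
    have c: "0 < c" "c \<le> real n * dist_int (real n * \<alpha>)"
      using bad n unfolding bad_const_def by auto
    have diff: "signed_err \<alpha> u - signed_err \<alpha> v
        = real n * \<alpha> - of_int (round (real u * \<alpha>) - round (real v * \<alpha>))"
      using that by (simp add: signed_err_def n_def of_nat_diff algebra_simps)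
    have "c / real M \<le> c / real n" using n c by (intro divide_left_mono) auto
    also have "\<dots> \<le> dist_int (real n * \<alpha>)"
      using n c by (simp add: pos_divide_le_eq mult.commute)
    also have "\<dots> \<le> \<bar>signed_err \<alpha> u - signed_err \<alpha> v\<bar>"
      unfolding diff by (rule dist_int_le)
    finally show ?thesis .
  qed
  show ?thesis
  proof (cases "y < x")
    case True
    then show ?thesis using less x y by auto
  next
    case False
    then have "x < y" using \<open>x \<noteq> y\<close> by simp
    then show ?thesis using less[of x y] x y by (auto simp: abs_minus_commute)
  qed
qed

definition level :: "real \<Rightarrow> nat" where
  "level d = nat \<lfloor>log 2 (1 / d)\<rfloor>"

lemma level_bounds:
  assumes d: "0 < d" "d \<le> 1/2"
  shows "1 \<le> level d" "1 / 2^(level d + 1) < d" "d \<le> 1 / 2^level d"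
proof -
  define l where "l = \<lfloor>log 2 (1/d)\<rfloor>"
  have "1 \<le> log 2 (1/d)" using d by (subst le_log_iff) (auto simp: field_simps)
  then have l1: "1 \<le> l" by (simp add: l_def)
  have lev: "level d = nat l" by (simp add: level_def l_def)
  have "2 powr l \<le> 1/d \<and> 1/d < 2 powr (real_of_int l + 1)"
    using floor_log_eq_powr_iff[of "1/d" 2 l] d by (simp add: l_def)
  moreover have "real_of_int l = real (nat l)" "real_of_int l + 1 = real (nat l + 1)"
    using l1 by simp_all
  then have "2 powr l = 2 ^ nat l" "2 powr (real_of_int l + 1) = 2 ^ (nat l + 1)"
    by (simp_all only: powr_realpow zero_less_numeral)
  ultimately have "2 ^ level d \<le> 1/d" "1/d < 2 ^ (level d + 1)" by (simp_all add: lev)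
  then show "1 / 2^(level d + 1) < d" "d \<le> 1 / 2^level d"
    using d by (simp_all add: field_simps)
  show "1 \<le> level d" using l1 lev by simp
qed

text \<open>On the block \<open>[2^k, 2^(k+1))\<close> the level is at most \<open>k + r\<close> when \<open>1/c \<le> 2^r\<close>,
  because \<open>1/\<parallel>x \<alpha>\<parallel> \<le> x/c\<close>.\<close>
lemma level_le_in_block:
  assumes bad: "bad_const \<alpha> c" and r: "1/c \<le> 2^r" and x: "1 \<le> x" "x < 2^(k+1)"
  shows "level (dist_int (real x * \<alpha>)) \<le> k + r"
proof -
  define d where "d = dist_int (real x * \<alpha>)"
  have d: "0 < d" "d \<le> 1/2" using bad_const_dist_pos[OF bad x(1)] dist_int_le_half by (auto simp: d_def)
  have c: "0 < c" "c \<le> real x * d" using bad x unfolding bad_const_def d_def by auto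
  have "(2::real) ^ level d \<le> 1 / d"
    using level_bounds(3)[OF d] d by (simp add: field_simps)
  also have "\<dots> \<le> real x * (1/c)" using c d by (simp add: field_simps)
  also have "\<dots> < 2^(k+1) * 2^r"
  proof -
    have "real x < 2^(k+1)" using x(2) by (metis of_nat_less_iff of_nat_numeral of_nat_power)
    then show ?thesis using r c by (intro mult_less_le_imp_less) auto
  qed
  also have "\<dots> = 2^(k+1+r)" by (simp add: power_add)
  finally have "level d < k + 1 + r" by (rule power_less_imp_less_exp[rotated]) simp
  then show ?thesis by (simp add: d_def)
qed

text \<open>Counting per level: in a window of length \<open>M\<close> at most \<open>2 (M/(c 2^(i+1)) + 1)\<close>
  points have level \<open>i\<close>; for each sign the signed errors are \<open>c/M\<close>-separated
  and lie in an interval of length \<open>2^-(i+1)\<close>.\<close>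
lemma card_level_le:
  assumes bad: "bad_const \<alpha> c" and N: "1 \<le> N" and M: "0 < M"
  shows "real (card {x\<in>{N..<N+M}. level (dist_int (real x * \<alpha>)) = i})
         \<le> 2 * (real M / (c * 2^(i+1)) + 1)"
proof -
  define A where "A = {x\<in>{N..<N+M}. level (dist_int (real x * \<alpha>)) = i}"
  define e where "e = signed_err \<alpha>"
  have c: "0 < c" using bad by (simp add: bad_const_def)
  have range: "1 / 2^(i+1) < \<bar>e x\<bar> \<and> \<bar>e x\<bar> \<le> 1 / 2^(i+1) + 1 / 2^(i+1)" if "x \<in> A" for x
  proof -
    have d: "0 < dist_int (real x * \<alpha>)" "dist_int (real x * \<alpha>) \<le> 1/2"
      using bad_const_dist_pos[OF bad] dist_int_le_half that N by (auto simp: A_def)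
    have "(1::real) / 2^i = 1 / 2^(i+1) + 1 / 2^(i+1)" by simp
    then show ?thesis
      using level_bounds(2,3)[OF d] that by (simp add: A_def e_def abs_signed_err)
  qed
  have one_sign: "real (card {x\<in>A. 0 < s * e x}) \<le> real M / (c * 2^(i+1)) + 1"
    if s: "\<bar>s\<bar> = 1" for s :: real
  proof -
    have "real (card {x\<in>A. 0 < s * e x}) \<le> (1 / 2^(i+1)) / (c / real M) + 1"
    proof (rule card_separated_le[where v = "\<lambda>x. s * e x" and lo = "1 / 2^(i+1)"])
      show "c / real M \<le> \<bar>s * e x - s * e y\<bar>"
        if "x \<in> {x\<in>A. 0 < s * e x}" "y \<in> {x\<in>A. 0 < s * e x}" "x \<noteq> y" for x y
        using signed_err_separated[OF bad, of x N M y] that s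
        by (simp add: A_def e_def abs_mult flip: right_diff_distrib)
      show "1 / 2^(i+1) < s * e x \<and> s * e x \<le> 1 / 2^(i+1) + 1 / 2^(i+1)"
        if "x \<in> {x\<in>A. 0 < s * e x}" for x
        using range[of x] that s abs_of_pos[of "s * e x"] by (auto simp: abs_mult)
    qed (use c M in \<open>auto simp: A_def\<close>)
    then show ?thesis by (simp add: field_simps)
  qed
  have e_nonzero: "e x \<noteq> 0" if "x \<in> A" for x using range[OF that] by auto
  have "A = {x\<in>A. 0 < 1 * e x} \<union> {x\<in>A. 0 < -1 * e x}"
    using e_nonzero by (auto simp: neq_iff)
  then have "card A \<le> card {x\<in>A. 0 < 1 * e x} + card {x\<in>A. 0 < -1 * e x}"
    by (metis card_Un_le)
  then show ?thesis
    using one_sign[of 1] one_sign[of "-1"] unfolding A_def by simp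
qed

section \<open>The block estimate\<close>

definition summand :: "real \<Rightarrow> real \<Rightarrow> nat \<Rightarrow> real" where
  "summand \<alpha> a x = 1 / (dist_int (\<alpha> * real x) * real x
        * (ln (1 / dist_int (real x * \<alpha>))) powr a * (ln (real x)) powr (2 - a))"

lemma summand_nonneg: "0 \<le> summand \<alpha> a x"
  unfolding summand_def by (intro divide_nonneg_nonneg mult_nonneg_nonneg) (auto simp: dist_int_nonneg)

lemma summand_le_level:
  assumes bad: "bad_const \<alpha> c" and a: "0 < a" "a < 1" and k: "1 \<le> k"
    and x: "x \<in> {2^k..<2^(k+1)}" and i: "level (dist_int (real x * \<alpha>)) = i"
  shows "summand \<alpha> a x \<le> 1 / ((1 / 2^(i+1)) * 2^k * (real i * ln 2) powr a
                               * (real k * ln 2) powr (2 - a))"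
proof -
  define d where "d = dist_int (real x * \<alpha>)"
  have x1: "1 \<le> x" using x by (auto intro: order.trans[OF one_le_power])
  have d: "0 < d" "d \<le> 1/2" using bad_const_dist_pos[OF bad x1] dist_int_le_half by (auto simp: d_def)
  note lev = level_bounds[OF d, unfolded d_def i, folded d_def]
  have xk: "(2::real)^k \<le> real x" using x
    by (metis atLeastLessThan_iff of_nat_le_iff of_nat_numeral of_nat_power)
  have "ln ((2::real) ^ i) \<le> ln (1 / d)"
    using lev(3) d by (subst ln_le_cancel_iff) (auto simp: field_simps)
  then have ln_d: "real i * ln 2 \<le> ln (1 / d)" by (simp add: ln_realpow)
  have "ln ((2::real) ^ k) \<le> ln (real x)" using xk x1 by (subst ln_le_cancel_iff) auto
  then have ln_x: "real k * ln 2 \<le> ln (real x)" by (simp add: ln_realpow)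
  have "1 / (d * real x * (ln (1 / d)) powr a * (ln (real x)) powr (2 - a))
     \<le> 1 / ((1 / 2^(i+1)) * 2^k * (real i * ln 2) powr a * (real k * ln 2) powr (2 - a))"
    using lev(1,2) xk ln_d ln_x k a by (intro inverse_prod_powr_antimono) auto
  then show ?thesis unfolding summand_def d_def by (simp add: mult.commute)
qed

lemma level_contribution_le:
  fixes a c :: real and i k r :: nat
  assumes c: "0 < c" and i: "1 \<le> i" "i \<le> k + r" and k: "1 \<le> k"
  shows "2 * (2^k / (c * 2^(i+1)) + 1)
           * (1 / ((1 / 2^(i+1)) * 2^k * (real i * ln 2) powr a * (real k * ln 2) powr (2 - a)))
         \<le> (2/c + 2^(r+2)) / ((ln 2)^2 * real k powr (2 - a)) * real i powr (-a)"
proof -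
  define D where "D = (real i * ln 2) powr a * (real k * ln 2) powr (2 - a)"
  have "ln 2 powr a * ln 2 powr (2 - a) = (ln 2)^2"
    by (simp flip: powr_add)
  then have D_eq: "D = (ln 2)^2 * real k powr (2 - a) * real i powr a"
    unfolding D_def using i k by (simp add: powr_mult field_simps)
  have D0: "0 < D" using i k by (simp add: D_def)
  have "(2::real)^(i+2) \<le> 2^(k+r+2)" using i by (intro power_increasing) auto
  then have "(2::real)^(i+2) / 2^k \<le> 2^(r+2)" by (simp add: field_simps power_add)
  then have num: "2/c + 2^(i+2) / 2^k \<le> 2/c + 2^(r+2)" by simp
  have "2 * (2^k / (c * 2^(i+1)) + 1)
           * (1 / ((1 / 2^(i+1)) * 2^k * (real i * ln 2) powr a * (real k * ln 2) powr (2 - a)))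
        = 2 * (2^k / (c * 2^(i+1)) + 1) * (2^(i+1) / (2^k * D))"
    by (simp add: D_def mult.assoc)
  also have "\<dots> = (2/c + 2^(i+2) / 2^k) / D"
    using c D0 by (simp add: field_simps power_add)
  also have "\<dots> \<le> (2/c + 2^(r+2)) / D" using num D0 by (simp add: divide_right_mono)
  also have "\<dots> = (2/c + 2^(r+2)) / ((ln 2)^2 * real k powr (2 - a)) * real i powr (-a)"
    using i by (simp add: D_eq powr_minus field_simps)
  finally show ?thesis .
qed

definition block_const :: "real \<Rightarrow> real \<Rightarrow> nat \<Rightarrow> real" where
  "block_const a c r = (2/c + 2^(r+2)) * (1 + real r) powr (1 - a) / ((1 - a) * (ln 2)^2)"

lemma block_const_pos: "0 < a \<Longrightarrow> a < 1 \<Longrightarrow> 0 < c \<Longrightarrow> 0 < block_const a c r"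
  unfolding block_const_def by (intro divide_pos_pos mult_pos_pos add_pos_pos) auto

lemma block_sum_le:
  assumes bad: "bad_const \<alpha> c" and a: "0 < a" "a < 1" and r: "1/c \<le> 2^r" and k: "1 \<le> k"
  shows "(\<Sum>x\<in>{2^k..<2^(k+1)}. summand \<alpha> a x) \<le> block_const a c r / real k"
proof -
  define B where "B = {(2::nat)^k..<2^(k+1)}"
  define lev where "lev x = level (dist_int (real x * \<alpha>))" for x :: nat
  define U where "U i = 1 / ((1 / 2^(i+1)) * 2^k * (real i * ln 2) powr a
                              * (real k * ln 2) powr (2 - a))" for i :: nat
  define W where "W = (2/c + 2^(r+2)) / ((ln 2)^2 * real k powr (2 - a))"
  have c: "0 < c" using bad by (simp add: bad_const_def)
  have B_window: "B = {2^k..<2^k + 2^k}" by (simp add: B_def mult_2)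
  have lev_range: "lev ` B \<subseteq> {1..k+r}"
  proof
    fix j assume "j \<in> lev ` B"
    then obtain x where x: "x \<in> B" "j = lev x" by auto
    have x1: "1 \<le> x" using x(1) by (auto simp: B_def intro: order.trans[OF one_le_power])
    have "0 < dist_int (real x * \<alpha>)" using bad_const_dist_pos[OF bad x1] .
    then have "1 \<le> lev x" using level_bounds(1) dist_int_le_half by (simp add: lev_def)
    moreover have "lev x \<le> k + r"
      using level_le_in_block[OF bad r x1] x(1) by (simp add: lev_def B_def)
    ultimately show "j \<in> {1..k+r}" using x(2) by simp
  qed
  have "(\<Sum>x\<in>B. summand \<alpha> a x) \<le> (\<Sum>i\<in>{1..k+r}. real (card {x\<in>B. lev x = i}) * U i)"
    using lev_range summand_le_level[OF bad a k]
    by (intro sum_le_card_fibres) (auto simp: B_def U_def lev_def)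
  also have "\<dots> \<le> (\<Sum>i\<in>{1..k+r}. W * real i powr (-a))"
  proof (rule sum_mono)
    fix i assume i: "i \<in> {1..k+r}"
    have U0: "0 \<le> U i" using i k by (simp add: U_def)
    have "real (card {x\<in>B. lev x = i}) \<le> 2 * (2^k / (c * 2^(i+1)) + 1)"
      using card_level_le[OF bad, of "2^k" "2^k" i] unfolding B_window lev_def by simp
    then have "real (card {x\<in>B. lev x = i}) * U i \<le> 2 * (2^k / (c * 2^(i+1)) + 1) * U i"
      using U0 by (rule mult_right_mono)
    also have "\<dots> \<le> W * real i powr (-a)"
      using level_contribution_le[OF c _ _ k, of i r a] i unfolding U_def W_def by simp
    finally show "real (card {x\<in>B. lev x = i}) * U i \<le> W * real i powr (-a)" .
  qed
  also have "\<dots> = W * (\<Sum>i=1..k+r. real i powr (-a))" by (simp add: sum_distrib_left)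
  also have "\<dots> \<le> W * (real (k+r) powr (1-a) / (1-a))"
    using sum_powr_neg_le[OF a, of "k+r"] c unfolding W_def by (intro mult_left_mono) auto
  also have "\<dots> \<le> W * (((1 + real r) * real k) powr (1-a) / (1-a))"
  proof -
    have "real (k+r) \<le> (1 + real r) * real k"
      using k mult_left_mono[of 1 "real k" "real r"] by (simp add: algebra_simps)
    then show ?thesis using a c unfolding W_def
      by (intro mult_left_mono divide_right_mono powr_mono2) auto
  qed
  also have "\<dots> = block_const a c r / real k"
  proof -
    have "real k powr (1 - a) = real k powr ((2 - a) - 1)" by simp
    also have "\<dots> = real k powr (2 - a) / real k" using k by (simp add: powr_diff power2_eq_square)
    then have split: "((1 + real r) * real k) powr (1 - a)
        = (1 + real r) powr (1 - a) * (real k powr (2 - a) / real k)"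
      by (simp add: powr_mult)
    have "0 < real k powr (2 - a)" "0 < (ln (2::real))^2" "a \<noteq> 1" using k a by auto
    then show ?thesis
      using c unfolding W_def block_const_def split by (simp add: field_simps)
  qed
  finally show ?thesis unfolding B_def .
qed

theorem lemma3:
  fixes \<alpha> a :: real
  assumes "badly_approximable \<alpha>" and "0 < a" and "a < 1"
  shows "\<exists>C>0. \<forall>q::nat. q \<ge> 2 \<longrightarrow>
    (\<Sum>x=q..q^3. 1 / (dist_int (\<alpha> * real x) * real x
        * (ln (1 / dist_int (real x * \<alpha>))) powr a * (ln (real x)) powr (2 - a))) \<le> C"
proof -
  obtain c where bad: "bad_const \<alpha> c" using badly_approximable_bad_const[OF assms(1)] by blast
  then have c: "0 < c" by (simp add: bad_const_def)
  obtain r :: nat where r: "1/c < 2^r" using real_arch_pow[of 2 "1/c"] by auto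
  define K where "K = block_const a c r"
  have K: "0 < K" unfolding K_def using block_const_pos assms(2,3) c by simp
  have "(\<Sum>x=q..q^3. summand \<alpha> a x) \<le> 5 * K" if "2 \<le> q" for q
    using sum_to_cube_le[OF summand_nonneg _ _ that] K block_sum_le[OF bad assms(2,3)] r
    unfolding K_def by (simp add: less_imp_le)
  then show ?thesis using K unfolding summand_def by (intro exI[of _ "5 * K"]) auto
qed

end
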